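(* Let $B_N'=\dfrac{\sum_{k=1}^{N}\frac{1}{\log(k+1)}}{\sum_{k=1}^{2N}\frac{1}{\log(k+1)}}$ for $N\in\mathbb N$. Then $B_{N+1}'<B_N'$ for all integers $N\ge 5$.
   Context: $\log$ denotes the logarithm to base $2$. *)

theory Defs
  imports Complex_Main
begin

definition Bprime :: "nat \<Rightarrow> real" where
  "Bprime N = (\<Sum>k=1..N. 1 / log 2 (real k + 1)) / (\<Sum>k=1..2*N. 1 / log 2 (real k + 1))"

end

(*
  Write a k = 1 / ln (k + 1) and S n = a 1 + ... + a n; the base of the logarithm cancels, so
  B'(N) = S N / S (2N).  Passing from N to N + 1 adds a (N + 1) to the numerator and
  a (2N + 1) + a (2N + 2) to the denominator, so B'(N + 1) is the mediant of B'(N) and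
  q N = a (N + 1) / (a (2N + 1) + a (2N + 2)).  Hence B'(N + 1) < B'(N) iff q N < B'(N), and
  then also q N < B'(N + 1); so once q is non-increasing the inequality q N < B'(N) propagates
  from N to N + 1.  It remains to check q 5 < B'(5) and q (N + 1) < q N for N >= 5: numerically
  for N = 5, 6, and for larger N from ln (m + 1) ln (2m + 2) < ln (m + 2) ln (2m), which follows
  from ln (1 + x) <= x and 1 + 2 ln (m + 1) < m ln 2 for m >= 8.
*)

theory Submission
  imports Defs "HOL-Analysis.Harmonic_Numbers"
begin

definition half_sum_ratio :: "(nat \<Rightarrow> real) \<Rightarrow> nat \<Rightarrow> real" where
  "half_sum_ratio a N = (\<Sum>k=1..N. a k) / (\<Sum>k=1..2*N. a k)"

definition increment_ratio :: "(nat \<Rightarrow> real) \<Rightarrow> nat \<Rightarrow> real" where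
  "increment_ratio a N = a (N + 1) / (a (2*N + 1) + a (2*N + 2))"

lemma mediant_less_iff:
  fixes s t x y :: real
  assumes "0 < t" "0 < y"
  shows "(s + x) / (t + y) < s / t \<longleftrightarrow> x / y < s / t"
  using assms by (simp add: field_simps add_pos_pos)

lemma less_mediant:
  fixes s t x y :: real
  assumes "0 < t" "0 < y" "x / y < s / t"
  shows "x / y < (s + x) / (t + y)"
  using assms by (simp add: field_simps add_pos_pos)

lemma half_sum_ratio_Suc:
  "half_sum_ratio a (Suc N) =
     ((\<Sum>k=1..N. a k) + a (N + 1)) / ((\<Sum>k=1..2*N. a k) + (a (2*N + 1) + a (2*N + 2)))"
  by (simp add: half_sum_ratio_def add.assoc)

lemma half_sum_ratio_Suc_less_iff:
  fixes a :: "nat \<Rightarrow> real"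
  assumes pos: "\<And>k. 0 < k \<Longrightarrow> 0 < a k" and "0 < N"
  shows "half_sum_ratio a (Suc N) < half_sum_ratio a N \<longleftrightarrow>
    increment_ratio a N < half_sum_ratio a N"
proof -
  have "0 < (\<Sum>k=1..2*N. a k)" using assms by (intro sum_pos) auto
  moreover have "0 < a (2*N + 1) + a (2*N + 2)" using pos by (simp add: add_pos_pos)
  ultimately show ?thesis
    unfolding half_sum_ratio_Suc unfolding increment_ratio_def half_sum_ratio_def
    by (rule mediant_less_iff)
qed

lemma increment_ratio_less_half_sum_ratio:
  fixes a :: "nat \<Rightarrow> real"
  assumes pos: "\<And>k. 0 < k \<Longrightarrow> 0 < a k" and "0 < n\<^sub>0"
    and start: "increment_ratio a n\<^sub>0 < half_sum_ratio a n\<^sub>0"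
    and antimono: "\<And>n. n\<^sub>0 \<le> n \<Longrightarrow> increment_ratio a (Suc n) \<le> increment_ratio a n"
    and "n\<^sub>0 \<le> N"
  shows "increment_ratio a N < half_sum_ratio a N"
  using \<open>n\<^sub>0 \<le> N\<close>
proof (induction N rule: nat_induct_at_least)
  case base
  show ?case by (fact start)
next
  case (Suc n)
  have "0 < (\<Sum>k=1..2*n. a k)" using pos Suc.hyps \<open>0 < n\<^sub>0\<close> by (intro sum_pos) auto
  moreover have "0 < a (2*n + 1) + a (2*n + 2)" using pos by (simp add: add_pos_pos)
  ultimately have "increment_ratio a n < half_sum_ratio a (Suc n)"
    using Suc.IH unfolding half_sum_ratio_Suc unfolding increment_ratio_def half_sum_ratio_def
    by (rule less_mediant)
  then show ?case using antimono[OF Suc.hyps] by linarith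
qed

lemma half_sum_ratio_cmult:
  "c \<noteq> 0 \<Longrightarrow> half_sum_ratio (\<lambda>k. c * a k) N = half_sum_ratio a N"
  by (simp add: half_sum_ratio_def flip: sum_distrib_left)

definition inv_ln_succ :: "nat \<Rightarrow> real" where
  "inv_ln_succ k = 1 / ln (real k + 1)"

lemma inv_ln_succ_pos: "0 < k \<Longrightarrow> 0 < inv_ln_succ k"
  by (simp add: inv_ln_succ_def)

lemma Bprime_eq_half_sum_ratio: "Bprime N = half_sum_ratio inv_ln_succ N"
proof -
  have "(\<lambda>k. 1 / log 2 (real k + 1)) = (\<lambda>k. ln 2 * inv_ln_succ k)"
    by (simp add: fun_eq_iff log_def inv_ln_succ_def)
  then have "Bprime N = half_sum_ratio (\<lambda>k. ln 2 * inv_ln_succ k) N"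
    unfolding Bprime_def half_sum_ratio_def by (rule arg_cong)
  then show ?thesis by (simp add: half_sum_ratio_cmult)
qed

lemma three_mult_square_less_two_power: "8 \<le> n \<Longrightarrow> 3 * (n + 1)^2 < (2::nat) ^ n"
proof (induction n rule: nat_induct_at_least)
  case base
  then show ?case by simp
next
  case (Suc n)
  have "8 * 8 \<le> n * n" using Suc.hyps mult_le_mono by blast
  then have "3 * (Suc n + 1)^2 \<le> 2 * (3 * (n + 1)^2)" by (simp add: power2_eq_square)
  also have "\<dots> < 2 * 2^n" using Suc.IH by simp
  finally show ?case by simp
qed

lemma one_add_two_ln_less:
  assumes "8 \<le> m"
  shows "1 + 2 * ln (real m + 1) < real m * ln 2"
proof -
  have "1 \<le> ln (3::real)" using exp_le by (simp add: ln_ge_iff)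
  have "real (3 * (m + 1)^2) < real (2 ^ m)"
    using three_mult_square_less_two_power[OF assms] by linarith
  then have "3 * (real m + 1)^2 < 2 ^ m" by (simp add: add.commute)
  then have "ln (3 * (real m + 1)^2) < ln (2 ^ m)" by simp
  then show ?thesis using \<open>1 \<le> ln 3\<close> by (simp add: ln_mult ln_realpow)
qed

lemma ln_add_le: "0 < x \<Longrightarrow> 0 \<le> h \<Longrightarrow> ln (x + h) \<le> ln x + h / x"
  for x h :: real
  using ln_add_one_self_le_self[of "h / x"] by (simp add: field_simps ln_div)

lemma ln_succ_mult_less:
  fixes m :: nat and q r :: real
  assumes "8 \<le> m" "ln (2 * real m) \<le> q" "r \<le> q + 1 / real m"
  shows "ln (real m + 1) * r < ln (real m + 2) * q"
proof -
  define u where "u = ln (real m + 1)"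
  have m_ge: "8 \<le> real m" using assms(1) by simp
  have "0 < ln (2 * real m)" using m_ge by simp
  then have "0 < q" using assms(2) by linarith
  have "u \<le> ln (real m) + 1 / real m"
    using ln_add_le[of "real m" 1] m_ge by (simp add: u_def)
  then have q_lower: "ln 2 + u - 1 / real m \<le> q" using assms(2) m_ge by (simp add: ln_mult)
  have "ln ((real m + 1) / (real m + 2)) \<le> (real m + 1) / (real m + 2) - 1"
    by (rule ln_le_minus_one) (use m_ge in simp)
  then have gap: "u + 1 / (real m + 2) \<le> ln (real m + 2)"
    using m_ge by (simp add: u_def ln_div field_simps)
  have "(ln 2 + u - 1 / real m) * real m = real m * ln 2 + u * real m - 1"
    using m_ge by (simp add: field_simps)
  moreover have "(ln 2 + u - 1 / real m) * real m \<le> q * real m"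
    using q_lower m_ge by (intro mult_right_mono) auto
  ultimately have "u * real m + 2 * u < q * real m"
    using one_add_two_ln_less[OF assms(1)] unfolding u_def[symmetric] by linarith
  have "u * r \<le> u * (q + 1 / real m)"
    using assms(3) m_ge by (intro mult_left_mono) (simp_all add: u_def)
  also have "\<dots> = u * q + u / real m" by (simp add: algebra_simps)
  also have "u / real m < q / (real m + 2)"
    using \<open>u * real m + 2 * u < q * real m\<close> m_ge by (simp add: field_simps)
  also have "u * q + q / (real m + 2) = (u + 1 / (real m + 2)) * q" by (simp add: algebra_simps)
  also have "\<dots> \<le> ln (real m + 2) * q"
    using gap \<open>0 < q\<close> by (intro mult_right_mono) auto
  finally show ?thesis by (simp add: u_def)
qed

lemma inverse_ratio_less:
  fixes u p q\<^sub>1 q\<^sub>2 r\<^sub>1 r\<^sub>2 :: real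
  assumes "0 < u" "0 < p" "0 < q\<^sub>1" "0 < q\<^sub>2" "0 < r\<^sub>1" "0 < r\<^sub>2"
    and "u * r\<^sub>1 < p * q\<^sub>1" "u * r\<^sub>2 < p * q\<^sub>2"
  shows "(1 / p) / (1 / r\<^sub>1 + 1 / r\<^sub>2) < (1 / u) / (1 / q\<^sub>1 + 1 / q\<^sub>2)"
proof -
  have "1 / (p * q\<^sub>1) < 1 / (u * r\<^sub>1)" "1 / (p * q\<^sub>2) < 1 / (u * r\<^sub>2)"
    using assms by (auto intro!: divide_strict_left_mono)
  then have "(1 / p) * (1 / q\<^sub>1 + 1 / q\<^sub>2) < (1 / u) * (1 / r\<^sub>1 + 1 / r\<^sub>2)"
    by (simp add: distrib_left)
  then show ?thesis using assms by (simp add: divide_less_eq less_divide_eq add_pos_pos mult.commute)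
qed

lemma increment_ratio_inv_ln_succ_Suc_less:
  assumes "7 \<le> n"
  shows "increment_ratio inv_ln_succ (Suc n) < increment_ratio inv_ln_succ n"
proof -
  define m where "m = n + 1"
  have "8 \<le> m" and m_ge: "8 \<le> real m" using assms by (simp_all add: m_def)
  have ratio_n: "increment_ratio inv_ln_succ n =
      (1 / ln (real m + 1)) / (1 / ln (2 * real m) + 1 / ln (2 * real m + 1))"
    by (simp add: increment_ratio_def inv_ln_succ_def m_def algebra_simps)
  have ratio_Suc_n: "increment_ratio inv_ln_succ (Suc n) =
      (1 / ln (real m + 2)) / (1 / ln (2 * real m + 2) + 1 / ln (2 * real m + 3))"
    by (simp add: increment_ratio_def inv_ln_succ_def m_def algebra_simps)
  have "ln (real m + 1) * ln (2 * real m + 2) < ln (real m + 2) * ln (2 * real m)"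
    using ln_add_le[of "2 * real m" 2] m_ge by (intro ln_succ_mult_less \<open>8 \<le> m\<close>) simp_all
  moreover have "ln (real m + 1) * ln (2 * real m + 3) < ln (real m + 2) * ln (2 * real m + 1)"
  proof (rule ln_succ_mult_less[OF \<open>8 \<le> m\<close>])
    have "2 / (2 * real m + 1) \<le> 1 / real m" using m_ge by (simp add: field_simps)
    then show "ln (2 * real m + 3) \<le> ln (2 * real m + 1) + 1 / real m"
      using ln_add_le[of "2 * real m + 1" 2] m_ge by (simp add: add.assoc)
  qed (use m_ge in simp)
  ultimately show ?thesis
    unfolding ratio_n ratio_Suc_n using m_ge by (intro inverse_ratio_less) simp_all
qed

(* All decimal constants below carry exactly five digits: linarith treats the denominators
   10 ^ 4 and 10 ^ 5 of the parsed decimals as unrelated atoms. *)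

lemma ln_bounds_Taylor:
  "ln (2::real) \<in> {0.69314..0.69315}" "ln (3/2::real) \<in> {0.40546..0.40547}"
  "ln (5/4::real) \<in> {0.22314..0.22315}" "ln (8/7::real) \<in> {0.13353..0.13354}"
  "ln (11/10::real) \<in> {0.09531..0.09532}" "ln (13/12::real) \<in> {0.08004..0.08005}"
  "ln (17/16::real) \<in> {0.06062..0.06063}"
  using ln_approx_bounds[of 2 5] ln_approx_bounds[of "3/2" 3] ln_approx_bounds[of "5/4" 3]
    ln_approx_bounds[of "8/7" 2] ln_approx_bounds[of "11/10" 2] ln_approx_bounds[of "13/12" 2]
    ln_approx_bounds[of "17/16" 2]
  by (simp_all add: eval_nat_numeral)

lemma ln_decompositions:
  "ln (3::real) = ln 2 + ln (3/2)" "ln (4::real) = ln 2 + ln 2" "ln (5::real) = ln 4 + ln (5/4)"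
  "ln (6::real) = ln 2 + ln 3" "ln (8::real) = ln 4 + ln 2" "ln (7::real) = ln 8 - ln (8/7)"
  "ln (9::real) = ln 3 + ln 3" "ln (10::real) = ln 2 + ln 5" "ln (11::real) = ln 10 + ln (11/10)"
  "ln (12::real) = ln 4 + ln 3" "ln (13::real) = ln 12 + ln (13/12)" "ln (14::real) = ln 2 + ln 7"
  "ln (15::real) = ln 3 + ln 5" "ln (16::real) = ln 8 + ln 2" "ln (17::real) = ln 16 + ln (17/16)"
  using ln_mult[of 2 "3/2"] ln_mult[of 2 2] ln_mult[of 4 "5/4"] ln_mult[of 2 3] ln_mult[of 4 2]
    ln_div[of 8 "8/7"] ln_mult[of 3 3] ln_mult[of 2 5] ln_mult[of 10 "11/10"] ln_mult[of 4 3]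
    ln_mult[of 12 "13/12"] ln_mult[of 2 7] ln_mult[of 3 5] ln_mult[of 8 2] ln_mult[of 16 "17/16"]
  by simp_all

lemma ln_bounds_2_to_17:
  "ln (2::real) \<in> {0.69314..0.69315}" "ln (3::real) \<in> {1.09860..1.09862}"
  "ln (4::real) \<in> {1.38628..1.38630}" "ln (5::real) \<in> {1.60942..1.60945}"
  "ln (6::real) \<in> {1.79174..1.79177}" "ln (7::real) \<in> {1.94588..1.94592}"
  "ln (8::real) \<in> {2.07942..2.07945}" "ln (9::real) \<in> {2.19720..2.19724}"
  "ln (10::real) \<in> {2.30256..2.30260}" "ln (11::real) \<in> {2.39787..2.39792}"
  "ln (12::real) \<in> {2.48488..2.48492}" "ln (13::real) \<in> {2.56492..2.56497}"
  "ln (14::real) \<in> {2.63902..2.63907}" "ln (15::real) \<in> {2.70802..2.70807}"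
  "ln (16::real) \<in> {2.77256..2.77260}" "ln (17::real) \<in> {2.83318..2.83323}"
  using ln_bounds_Taylor unfolding ln_decompositions by auto

lemma one_div_mem_atLeastAtMost:
  fixes x l u r R :: real
  assumes "x \<in> {l..u}" "0 < l" "r \<le> 1 / u" "1 / l \<le> R"
  shows "1 / x \<in> {r..R}"
proof -
  have "1 / u \<le> 1 / x" "1 / x \<le> 1 / l"
    using assms(1,2) by (auto intro!: divide_left_mono mult_pos_pos)
  then show ?thesis using assms(3,4) by simp
qed

lemma inverse_ln_bounds:
  "1 / ln (2::real) \<in> {1.44268..1.44271}" "1 / ln (3::real) \<in> {0.91023..0.91025}"
  "1 / ln (4::real) \<in> {0.72134..0.72136}" "1 / ln (5::real) \<in> {0.62133..0.62135}"
  "1 / ln (6::real) \<in> {0.55810..0.55812}" "1 / ln (7::real) \<in> {0.51389..0.51391}"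
  "1 / ln (8::real) \<in> {0.48089..0.48091}" "1 / ln (9::real) \<in> {0.45511..0.45513}"
  "1 / ln (10::real) \<in> {0.43429..0.43430}" "1 / ln (11::real) \<in> {0.41702..0.41704}"
  "1 / ln (12::real) \<in> {0.40242..0.40244}" "1 / ln (13::real) \<in> {0.38986..0.38988}"
  "1 / ln (14::real) \<in> {0.37892..0.37893}" "1 / ln (15::real) \<in> {0.36926..0.36928}"
  "1 / ln (16::real) \<in> {0.36067..0.36068}" "1 / ln (17::real) \<in> {0.35295..0.35297}"
  by (rule one_div_mem_atLeastAtMost, rule ln_bounds_2_to_17, simp, simp, simp)+

lemma divide_less_divide_by_bounds:
  fixes x y z w X Y Z W :: real
  assumes "0 \<le> X" "x \<le> X" "0 < Y" "Y \<le> y"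
    and "0 \<le> Z" "Z \<le> z" "0 < w" "w \<le> W"
    and "X / Y < Z / W"
  shows "x / y < z / w"
proof -
  have "x / y \<le> X / Y" using assms(1-4) by (rule frac_le)
  also note \<open>X / Y < Z / W\<close>
  also have "Z / W \<le> z / w" using assms(5-8) by (intro frac_le) auto
  finally show ?thesis .
qed

lemma increment_ratio_inv_ln_succ_5_less:
  "increment_ratio inv_ln_succ 5 < half_sum_ratio inv_ln_succ 5"
proof -
  have "increment_ratio inv_ln_succ 5 = (1 / ln 7) / (1 / ln 12 + 1 / ln 13)"
    by (simp add: increment_ratio_def inv_ln_succ_def)
  moreover have "half_sum_ratio inv_ln_succ 5 =
      (1 / ln 2 + 1 / ln 3 + 1 / ln 4 + 1 / ln 5 + 1 / ln 6) /
      (1 / ln 2 + 1 / ln 3 + 1 / ln 4 + 1 / ln 5 + 1 / ln 6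
        + 1 / ln 7 + 1 / ln 8 + 1 / ln 9 + 1 / ln 10 + 1 / ln 11)"
    (is "_ = ?S\<^sub>5 / ?S\<^sub>1\<^sub>0")
    by (simp add: half_sum_ratio_def inv_ln_succ_def numeral_eq_Suc)
  moreover have "(1 / ln 7) / (1 / ln 12 + 1 / ln 13) < ?S\<^sub>5 / ?S\<^sub>1\<^sub>0"
  proof (rule divide_less_divide_by_bounds[where X = "0.51391" and Y = "0.79228"
        and Z = "4.25368" and W = "6.55508"])
    show "1 / ln 7 \<le> (0.51391::real)" "(0.79228::real) \<le> 1 / ln 12 + 1 / ln 13"
      using inverse_ln_bounds(6,11,12) unfolding atLeastAtMost_iff by linarith+
    show "4.25368 \<le> ?S\<^sub>5" "?S\<^sub>1\<^sub>0 \<le> 6.55508"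
      using inverse_ln_bounds(1-10) unfolding atLeastAtMost_iff by linarith+
    show "0 < ?S\<^sub>1\<^sub>0" by (intro add_pos_pos divide_pos_pos) simp_all
  qed simp_all
  ultimately show ?thesis by simp
qed

lemma increment_ratio_inv_ln_succ_6_less:
  "increment_ratio inv_ln_succ 6 < increment_ratio inv_ln_succ 5"
proof -
  have "(1 / ln 8) / (1 / ln 14 + 1 / ln 15) < (1 / ln 7) / (1 / ln 12 + 1 / ln (13::real))"
  proof (rule divide_less_divide_by_bounds[where X = "0.48091" and Y = "0.74818"
        and Z = "0.51389" and W = "0.79232"])
    show "1 / ln 8 \<le> (0.48091::real)" "(0.74818::real) \<le> 1 / ln 14 + 1 / ln 15"
      "(0.51389::real) \<le> 1 / ln 7" "1 / ln 12 + 1 / ln 13 \<le> (0.79232::real)"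
      using inverse_ln_bounds(6,7,11-14) unfolding atLeastAtMost_iff by linarith+
    show "0 < 1 / ln 12 + 1 / ln (13::real)" by (intro add_pos_pos divide_pos_pos) simp_all
  qed simp_all
  then show ?thesis by (simp add: increment_ratio_def inv_ln_succ_def)
qed

lemma increment_ratio_inv_ln_succ_7_less:
  "increment_ratio inv_ln_succ 7 < increment_ratio inv_ln_succ 6"
proof -
  have "(1 / ln 9) / (1 / ln 16 + 1 / ln 17) < (1 / ln 8) / (1 / ln 14 + 1 / ln (15::real))"
  proof (rule divide_less_divide_by_bounds[where X = "0.45513" and Y = "0.71362"
        and Z = "0.48089" and W = "0.74821"])
    show "1 / ln 9 \<le> (0.45513::real)" "(0.71362::real) \<le> 1 / ln 16 + 1 / ln 17"
      "(0.48089::real) \<le> 1 / ln 8" "1 / ln 14 + 1 / ln 15 \<le> (0.74821::real)"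
      using inverse_ln_bounds(7,8,13-16) unfolding atLeastAtMost_iff by linarith+
    show "0 < 1 / ln 14 + 1 / ln (15::real)" by (intro add_pos_pos divide_pos_pos) simp_all
  qed simp_all
  then show ?thesis by (simp add: increment_ratio_def inv_ln_succ_def)
qed

lemma increment_ratio_inv_ln_succ_antimono:
  assumes "5 \<le> n"
  shows "increment_ratio inv_ln_succ (Suc n) \<le> increment_ratio inv_ln_succ n"
proof -
  consider "n = 5" | "n = 6" | "7 \<le> n" using assms by linarith
  then show ?thesis
  proof cases
    case 1
    then show ?thesis using increment_ratio_inv_ln_succ_6_less by simp
  next
    case 2
    then show ?thesis using increment_ratio_inv_ln_succ_7_less by simp
  next
    case 3
    then show ?thesis using increment_ratio_inv_ln_succ_Suc_less by (simp add: less_imp_le)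
  qed
qed

theorem proposition3:
  fixes N :: nat
  assumes "N \<ge> 5"
  shows "Bprime (N + 1) < Bprime N"
proof -
  have "increment_ratio inv_ln_succ N < half_sum_ratio inv_ln_succ N"
    by (rule increment_ratio_less_half_sum_ratio[where n\<^sub>0 = 5])
      (simp_all add: inv_ln_succ_pos increment_ratio_inv_ln_succ_5_less
        increment_ratio_inv_ln_succ_antimono assms)
  then have "half_sum_ratio inv_ln_succ (Suc N) < half_sum_ratio inv_ln_succ N"
    using assms by (subst half_sum_ratio_Suc_less_iff) (simp_all add: inv_ln_succ_pos)
  then show ?thesis by (simp add: Bprime_eq_half_sum_ratio)
qed

end
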